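(* Let $\delta>0$, $\alpha\in(0,2)$ and $\alpha_0\in(0,1)$, and suppose that $$\limsup_{|x|\to\infty}\bigg[\Big(\sup_{|z|\ge |x|}e^{-V(z)}\Big)e^{\delta|x|}|x|^{d+\alpha-\alpha_0}\bigg]=0.$$ Then there exists a constant $C_1>0$ such that for all $f\in C_b^\infty(\mathbb R^d)$, $$\int\big(f(x)-\mu_V(f)\big)^2\frac{e^{V(x)-\delta|x|}}{(1+|x|)^{d+\alpha}}\,\mu_V(dx)\le C_1 D_{\alpha,V,\delta}(f,f).$$
   Context: Let $d\ge1$. $V:\mathbb R^d\to\mathbb R$ is a locally bounded measurable function such that $e^{-V}$ is bounded and $\int e^{-V(x)}dx<\infty$; $\mu_V(dx)=\frac{e^{-V(x)}}{\int e^{-V(y)}dy}dx$, and $\mu_V(f)=\int f\,d\mu_V$. $C_b^\infty(\mathbb R^d)$ is the set of smooth functions on $\mathbb R^d$ that are bounded together with all their derivatives. For $\alpha\in(0,2)$, $\delta\ge0$, $$D_{\alpha,V,\delta}(f,f):=\iint\frac{(f(y)-f(x))^2}{|y-x|^{d+\alpha}}e^{-\delta|y-x|}\,dy\,\mu_V(dx).$$ *)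

theory Defs
  imports "HOL-Analysis.Analysis"
begin

fun iter_deriv :: "'a::euclidean_space list \<Rightarrow> ('a \<Rightarrow> real) \<Rightarrow> 'a \<Rightarrow> real" where
  "iter_deriv [] f = f"
| "iter_deriv (v # vs) f = (\<lambda>x. frechet_derivative (iter_deriv vs f) (at x) v)"

definition Cb_inf :: "('a::euclidean_space \<Rightarrow> real) \<Rightarrow> bool" where
  "Cb_inf f \<longleftrightarrow> (\<forall>vs \<in> lists Basis.
      (\<forall>x. iter_deriv vs f differentiable (at x)) \<and> bounded (range (iter_deriv vs f)))"

definition ZV :: "('a::euclidean_space \<Rightarrow> real) \<Rightarrow> real" where
  "ZV V = (\<integral>x. exp (- V x) \<partial>lborel)"

definition muV :: "('a::euclidean_space \<Rightarrow> real) \<Rightarrow> 'a measure" where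
  "muV V = density lborel (\<lambda>x. ennreal (exp (- V x) / ZV V))"

definition muV_int :: "('a::euclidean_space \<Rightarrow> real) \<Rightarrow> ('a \<Rightarrow> real) \<Rightarrow> real" where
  "muV_int V f = (\<integral>x. f x \<partial>muV V)"

definition Dform :: "real \<Rightarrow> ('a::euclidean_space \<Rightarrow> real) \<Rightarrow> real \<Rightarrow> ('a \<Rightarrow> real) \<Rightarrow> ennreal" where
  "Dform \<alpha> V \<delta> f = (\<integral>\<^sup>+x. (\<integral>\<^sup>+y. ennreal ((f y - f x)\<^sup>2 / norm (y - x) powr (real DIM('a) + \<alpha>)
        * exp (- \<delta> * norm (y - x))) \<partial>lborel) \<partial>muV V)"

end

theory Submission
  imports Defs "HOL-Probability.Distributions"
begin

text \<open>
  Write w(x) = exp(-delta|x|) / (1+|x|)^{d+alpha}.  Since mu_V has density exp(-V)/Z, the left-hand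
  side of the theorem equals (1/Z) times the Lebesgue integral of (f - mu_V f)^2 w.  The proof is
  the classical "local to global" argument:
  \<^item> an abstract weighted Poincare inequality (weighted_variance_le_local_energy): for a probability
    density rho and an integrable weight w with rho^2/w integrable, the w-weighted variance of f is
    bounded by the energy of f localised to a ball B of positive measure;
  \<^item> a kernel comparison (decay_weight_le_kernel): for x in a ball, w(y) is bounded by a constant
    times the jump kernel, so the localised energy is bounded by D_{alpha,V,delta}(f,f);
  \<^item> the tail hypothesis gives exp(-V(x)) <= exp(-delta|x|) for large |x|, which makes
    rho^2/w integrable (nn_integral_sq_over_decay_weight_finite).
\<close>

text \<open>The weight of the theorem without the factor exp V, i.e. the density (with respect to
  Lebesgue measure) of the left-hand side up to the normalising constant of mu_V.\<close>

definition decay_weight :: "real \<Rightarrow> real \<Rightarrow> 'a::real_normed_vector \<Rightarrow> real" where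
  "decay_weight \<delta> p x = exp (- \<delta> * norm x) / (1 + norm x) powr p"

lemma decay_weight_pos: "decay_weight \<delta> p x > 0"
proof -
  have "1 + norm x > 0" by (simp add: add_pos_nonneg)
  then show ?thesis by (simp add: decay_weight_def)
qed

lemma decay_weight_measurable [measurable]:
  "decay_weight \<delta> p \<in> borel_measurable (borel :: 'a::real_normed_vector measure)"
  unfolding decay_weight_def by measurable

text \<open>Integrability of exponential decay on the line, obtained from the exponential
  distribution and its reflection.\<close>

lemma nn_integral_exp_abs_finite:
  fixes l :: real assumes l: "l > 0"
  shows "(\<integral>\<^sup>+x. ennreal (exp (- l * \<bar>x\<bar>)) \<partial>lborel) < \<infinity>"
proof -
  have right: "(\<integral>\<^sup>+x. ennreal (exponential_density l x) \<partial>lborel) = 1"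
    using prob_space.emeasure_space_1[OF prob_space_exponential_density[OF l]]
    by (simp add: emeasure_density)
  have left: "(\<integral>\<^sup>+x. ennreal (exponential_density l (- x)) \<partial>lborel) = 1"
    using nn_integral_real_affine[of "\<lambda>x. ennreal (exponential_density l x)" "-1" 0] right
    by simp
  have "(\<integral>\<^sup>+x. ennreal (exp (- l * \<bar>x\<bar>)) \<partial>lborel)
     \<le> (\<integral>\<^sup>+x. ennreal (1/l) * (ennreal (exponential_density l x)
                                  + ennreal (exponential_density l (- x))) \<partial>lborel)"
  proof (rule nn_integral_mono)
    fix x :: real
    have "exp (- l * \<bar>x\<bar>) \<le> (1/l) * (exponential_density l x + exponential_density l (- x))"
      using l by (auto simp: exponential_density_def field_simps abs_if)
    then show "ennreal (exp (- l * \<bar>x\<bar>))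
        \<le> ennreal (1/l) * (ennreal (exponential_density l x) + ennreal (exponential_density l (- x)))"
      using l by (simp add: ennreal_mult[symmetric] ennreal_plus[symmetric] exponential_density_nonneg
          del: ennreal_plus)
  qed
  also have "\<dots> = ennreal (1/l) * 2"
    by (subst nn_integral_cmult) (auto simp: nn_integral_add right left)
  finally show ?thesis by (simp add: ennreal_mult_less_top order_le_less_trans)
qed

text \<open>Integrability of exp(-e|x|) on a Euclidean space: the norm dominates every
  coordinate, so the integrand is bounded by a product of one-dimensional ones (Tonelli).\<close>

lemma nn_integral_exp_norm_finite:
  fixes e :: real assumes e: "e > 0"
  shows "(\<integral>\<^sup>+x. ennreal (exp (- e * norm x)) \<partial>(lborel::'a::euclidean_space measure)) < \<infinity>"
proof -
  define l where "l = e / real DIM('a)"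
  have l: "l > 0" using e by (simp add: l_def)
  have "(\<integral>\<^sup>+x. ennreal (exp (- e * norm x)) \<partial>(lborel::'a measure))
      \<le> (\<integral>\<^sup>+x. (\<Prod>b\<in>Basis. ennreal (exp (- l * \<bar>x \<bullet> b\<bar>))) \<partial>(lborel::'a measure))"
  proof (rule nn_integral_mono)
    fix x :: 'a
    have "(\<Sum>b\<in>Basis. l * \<bar>x \<bullet> b\<bar>) \<le> (\<Sum>b\<in>(Basis::'a set). l * norm x)"
      using l by (intro sum_mono mult_left_mono) (auto simp: Basis_le_norm)
    also have "\<dots> = e * norm x" using e by (simp add: l_def)
    finally have "exp (- e * norm x) \<le> exp (- (\<Sum>b\<in>Basis. l * \<bar>x \<bullet> b\<bar>))" by simp
    also have "\<dots> = (\<Prod>b\<in>Basis. exp (- l * \<bar>x \<bullet> b\<bar>))"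
      by (simp add: exp_sum[symmetric] sum_negf)
    finally show "ennreal (exp (- e * norm x)) \<le> (\<Prod>b\<in>Basis. ennreal (exp (- l * \<bar>x \<bullet> b\<bar>)))"
      by (simp add: prod_ennreal ennreal_leI)
  qed
  also have "\<dots> = (\<Prod>b\<in>(Basis::'a set). (\<integral>\<^sup>+t. ennreal (exp (- l * \<bar>t\<bar>)) \<partial>lborel))"
    by (rule nn_integral_lborel_prod) auto
  also have "\<dots> < \<infinity>"
    using nn_integral_exp_abs_finite[OF l] by (simp add: power_less_top_ennreal)
  finally show ?thesis .
qed

lemma powr_le_const_mult_exp:
  fixes p d :: real assumes p: "p > 0" and d: "d > 0"
  obtains C where "C > 0" "\<And>t. t \<ge> 0 \<Longrightarrow> (1 + t) powr p \<le> C * exp (d * t)"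
proof -
  define a where "a = p / d"
  have a: "a > 0" using p d by (simp add: a_def)
  define C where "C = exp (p * (ln a - 1) + d)"
  show ?thesis
  proof (rule that[of C])
    show "C > 0" by (simp add: C_def)
    fix t :: real assume t: "t \<ge> 0"
    have "ln ((1 + t) / a) \<le> (1 + t) / a - 1" using t a by (intro ln_le_minus_one) auto
    then have "ln (1 + t) \<le> (1 + t) / a + ln a - 1" using t a by (simp add: ln_div)
    then have "p * ln (1 + t) \<le> p * ((1 + t) / a + ln a - 1)" using p by (simp add: mult_left_mono)
    also have "\<dots> = d * t + (p * (ln a - 1) + d)" using p d by (simp add: a_def field_simps)
    finally have "(1 + t) powr p \<le> exp (d * t + (p * (ln a - 1) + d))"
      using t by (simp add: powr_def)
    then show "(1 + t) powr p \<le> C * exp (d * t)" by (simp add: C_def exp_add mult.commute)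
  qed
qed

lemma nn_integral_exp_powr_finite:
  fixes d p :: real assumes d: "d > 0" and p: "p > 0"
  shows "(\<integral>\<^sup>+x. ennreal (exp (- d * norm x) * (1 + norm x) powr p)
           \<partial>(lborel::'a::euclidean_space measure)) < \<infinity>"
proof -
  obtain C where C: "C > 0" "\<And>t. t \<ge> 0 \<Longrightarrow> (1 + t) powr p \<le> C * exp ((d/2) * t)"
    using powr_le_const_mult_exp[OF p, of "d/2"] d by auto
  have "(\<integral>\<^sup>+x. ennreal (exp (- d * norm x) * (1 + norm x) powr p) \<partial>(lborel::'a measure))
     \<le> (\<integral>\<^sup>+x. ennreal C * ennreal (exp (- (d/2) * norm x)) \<partial>(lborel::'a measure))"
  proof (rule nn_integral_mono)
    fix x :: 'a
    have "exp (- d * norm x) * (1 + norm x) powr p \<le> exp (- d * norm x) * (C * exp ((d/2) * norm x))"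
      by (intro mult_left_mono C) auto
    also have "\<dots> = C * exp (- (d/2) * norm x)"
      by (simp add: mult_exp_exp algebra_simps)
    finally show "ennreal (exp (- d * norm x) * (1 + norm x) powr p)
        \<le> ennreal C * ennreal (exp (- (d/2) * norm x))"
      using C by (simp add: ennreal_mult[symmetric])
  qed
  also have "\<dots> = ennreal C * (\<integral>\<^sup>+x. ennreal (exp (- (d/2) * norm x)) \<partial>(lborel::'a measure))"
    by (rule nn_integral_cmult) auto
  also have "\<dots> < \<infinity>"
    using nn_integral_exp_norm_finite[of "d/2", where 'a='a] d by (simp add: ennreal_mult_less_top)
  finally show ?thesis .
qed

lemma nn_integral_decay_weight_finite:
  assumes "\<delta> > 0" "p \<ge> 0"
  shows "(\<integral>\<^sup>+x. ennreal (decay_weight \<delta> p x) \<partial>(lborel::'a::euclidean_space measure)) < \<infinity>"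
proof -
  have "(\<integral>\<^sup>+x. ennreal (decay_weight \<delta> p x) \<partial>(lborel::'a measure))
      \<le> (\<integral>\<^sup>+x. ennreal (exp (- \<delta> * norm x)) \<partial>(lborel::'a measure))"
  proof (rule nn_integral_mono)
    fix x :: 'a
    have "(1 + norm x) powr p \<ge> 1" using assms by (intro ge_one_powr_ge_zero) auto
    then show "ennreal (decay_weight \<delta> p x) \<le> ennreal (exp (- \<delta> * norm x))"
      by (simp add: decay_weight_def divide_le_eq ennreal_leI)
  qed
  also have "\<dots> < \<infinity>" using nn_integral_exp_norm_finite assms by blast
  finally show ?thesis .
qed

text \<open>A bounded function that decays like exp(-delta|x|) at infinity is square
  integrable against the reciprocal weight.  This is where the tail condition on V enters.\<close>

lemma nn_integral_sq_over_decay_weight_finite: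
  fixes g :: "'a::euclidean_space \<Rightarrow> real"
  assumes g_nonneg: "\<And>x. g x \<ge> 0" and g_bdd: "\<And>x. g x \<le> M"
    and decay: "\<And>x. norm x \<ge> R \<Longrightarrow> g x \<le> c * exp (- \<delta> * norm x)"
    and \<delta>: "\<delta> > 0" and p: "p > 0" and c: "c \<ge> 0"
  shows "(\<integral>\<^sup>+x. ennreal ((g x)\<^sup>2 / decay_weight \<delta> p x) \<partial>lborel) < \<infinity>"
proof -
  define C0 where "C0 = max (c\<^sup>2) (M\<^sup>2 * exp (2 * \<delta> * R))"
  have C0: "C0 \<ge> 0" by (simp add: C0_def le_max_iff_disj)
  have sq_bound: "(g x)\<^sup>2 * exp (\<delta> * norm x) \<le> C0 * exp (- \<delta> * norm x)" for x
  proof (cases "norm x \<ge> R")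
    case True
    have "(g x)\<^sup>2 \<le> (c * exp (- \<delta> * norm x))\<^sup>2"
      using decay[OF True] g_nonneg by (intro power_mono) auto
    then have "(g x)\<^sup>2 * exp (\<delta> * norm x) \<le> c\<^sup>2 * (exp (- \<delta> * norm x))\<^sup>2 * exp (\<delta> * norm x)"
      by (intro mult_right_mono) (auto simp: power_mult_distrib)
    also have "\<dots> = c\<^sup>2 * exp (- \<delta> * norm x)"
      by (simp add: power2_eq_square mult_exp_exp)
    also have "\<dots> \<le> C0 * exp (- \<delta> * norm x)"
      by (intro mult_right_mono) (auto simp: C0_def)
    finally show ?thesis .
  next
    case False
    have "(g x)\<^sup>2 \<le> M\<^sup>2" using g_nonneg g_bdd by (intro power_mono) auto
    moreover have "exp (\<delta> * norm x) \<le> exp (2 * \<delta> * R) * exp (- \<delta> * norm x)"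
      using False \<delta> by (simp add: mult_exp_exp)
    ultimately have "(g x)\<^sup>2 * exp (\<delta> * norm x) \<le> M\<^sup>2 * (exp (2 * \<delta> * R) * exp (- \<delta> * norm x))"
      by (intro mult_mono) auto
    also have "\<dots> \<le> C0 * exp (- \<delta> * norm x)"
      unfolding mult.assoc[symmetric] by (intro mult_right_mono) (auto simp: C0_def)
    finally show ?thesis .
  qed
  have "(\<integral>\<^sup>+x. ennreal ((g x)\<^sup>2 / decay_weight \<delta> p x) \<partial>lborel)
      \<le> (\<integral>\<^sup>+x. ennreal C0 * ennreal (exp (- \<delta> * norm x) * (1 + norm x) powr p) \<partial>(lborel::'a measure))"
  proof (rule nn_integral_mono)
    fix x :: 'a
    have "(g x)\<^sup>2 / decay_weight \<delta> p x = (g x)\<^sup>2 * exp (\<delta> * norm x) * (1 + norm x) powr p"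
      by (simp add: decay_weight_def exp_minus field_simps)
    also have "\<dots> \<le> C0 * exp (- \<delta> * norm x) * (1 + norm x) powr p"
      using sq_bound by (intro mult_right_mono) auto
    finally show "ennreal ((g x)\<^sup>2 / decay_weight \<delta> p x)
        \<le> ennreal C0 * ennreal (exp (- \<delta> * norm x) * (1 + norm x) powr p)"
      using C0 by (simp add: ennreal_mult[symmetric] mult.assoc ennreal_leI)
  qed
  also have "\<dots> = ennreal C0 * (\<integral>\<^sup>+x. ennreal (exp (- \<delta> * norm x) * (1 + norm x) powr p) \<partial>(lborel::'a measure))"
    by (rule nn_integral_cmult) auto
  also have "\<dots> < \<infinity>"
    using nn_integral_exp_powr_finite[OF \<delta> p, where 'a='a] by (simp add: ennreal_mult_less_top)
  finally show ?thesis .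
qed

text \<open>The tail hypothesis of the theorem implies that g decays at least like exp(-delta|x|)
  beyond some radius; only the fact that the limsup is below 1 is used.\<close>

lemma decay_from_Limsup:
  fixes g :: "'a::real_normed_vector \<Rightarrow> real"
  assumes g_nonneg: "\<And>z. g z \<ge> 0" and g_bdd: "bdd_above (range g)" and q: "q \<ge> 0"
    and lim: "Limsup at_infinity (\<lambda>x::'a. ereal ((SUP z \<in> {z. norm z \<ge> norm x}. g z)
                * exp (\<delta> * norm x) * norm x powr q)) < 1"
  obtains R where "R \<ge> 1" "\<And>x. norm x \<ge> R \<Longrightarrow> g x \<le> exp (- \<delta> * norm x)"
proof -
  have "eventually (\<lambda>x::'a. ereal ((SUP z \<in> {z. norm z \<ge> norm x}. g z)
                * exp (\<delta> * norm x) * norm x powr q) < 1) at_infinity"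
    by (rule Limsup_lessD[OF lim])
  then obtain R0 where R0: "\<And>x::'a. R0 \<le> norm x \<Longrightarrow>
      (SUP z \<in> {z. norm z \<ge> norm x}. g z) * exp (\<delta> * norm x) * norm x powr q < 1"
    unfolding eventually_at_infinity by auto
  show ?thesis
  proof (rule that[of "max R0 1"])
    fix x :: 'a assume x: "norm x \<ge> max R0 1"
    define S where "S = (SUP z \<in> {z. norm z \<ge> norm x}. g z)"
    have gS: "g x \<le> S"
      using g_bdd unfolding S_def by (intro cSUP_upper) (auto intro: bdd_above_mono)
    have "norm x powr q \<ge> 1" using x q by (intro ge_one_powr_ge_zero) auto
    have "g x * exp (\<delta> * norm x) \<le> S * exp (\<delta> * norm x)"
      using gS by (intro mult_right_mono) auto
    also have "\<dots> \<le> S * exp (\<delta> * norm x) * norm x powr q"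
      using mult_left_mono[OF \<open>norm x powr q \<ge> 1\<close>, of "S * exp (\<delta> * norm x)"] gS g_nonneg[of x]
      by simp
    also have "\<dots> < 1" using R0 x by (simp add: S_def)
    finally show "g x \<le> exp (- \<delta> * norm x)"
      by (simp add: exp_minus field_simps)
  qed simp
qed

text \<open>Variance identity on a finite measure space: the mean square distance of g from a
  point a is at least the total mass times the squared distance of a from the mean of g.\<close>

lemma mean_square_lower_bound:
  fixes N :: "'b measure" and g :: "'b \<Rightarrow> real"
  assumes fin: "finite_measure N" and P: "measure N (space N) > 0"
    and g[measurable]: "g \<in> borel_measurable N" and gb: "\<And>x. \<bar>g x\<bar> \<le> F"
  shows "ennreal (measure N (space N) * (a - (\<integral>x. g x \<partial>N) / measure N (space N))\<^sup>2)
           \<le> (\<integral>\<^sup>+x. ennreal ((a - g x)\<^sup>2) \<partial>N)"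
proof -
  interpret finite_measure N by (rule fin)
  define P where "P = measure N (space N)"
  define m where "m = (\<integral>x. g x \<partial>N) / P"
  have bounded_square_integrable: "integrable N (\<lambda>x. (b - g x)\<^sup>2)" for b
  proof (rule integrable_const_bound[of _ "(\<bar>b\<bar> + F)\<^sup>2"])
    show "AE x in N. norm ((b - g x)\<^sup>2) \<le> (\<bar>b\<bar> + F)\<^sup>2"
      using gb by (intro AE_I2) (simp add: abs_le_square_iff[symmetric] abs_le_iff; smt (verit))
  qed simp
  have ig: "integrable N g"
    by (rule integrable_const_bound[of _ F]) (auto simp: gb)
  have "(a - g x)\<^sup>2 = ((a - m)\<^sup>2 + 2 * (a - m) * m) - 2 * (a - m) * g x + (m - g x)\<^sup>2" for x
    by (simp add: power2_eq_square algebra_simps)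
  then have "(\<integral>x. (a - g x)\<^sup>2 \<partial>N)
      = ((a - m)\<^sup>2 + 2 * (a - m) * m) * P - 2 * (a - m) * (\<integral>x. g x \<partial>N) + (\<integral>x. (m - g x)\<^sup>2 \<partial>N)"
    using ig bounded_square_integrable[of m] by (simp add: P_def)
  also have "(\<integral>x. g x \<partial>N) = m * P" using P by (simp add: m_def P_def)
  finally have "(\<integral>x. (a - g x)\<^sup>2 \<partial>N) = P * (a - m)\<^sup>2 + (\<integral>x. (m - g x)\<^sup>2 \<partial>N)"
    by (simp add: algebra_simps)
  then have "P * (a - m)\<^sup>2 \<le> (\<integral>x. (a - g x)\<^sup>2 \<partial>N)" by simp
  moreover have "(\<integral>\<^sup>+x. ennreal ((a - g x)\<^sup>2) \<partial>N) = ennreal (\<integral>x. (a - g x)\<^sup>2 \<partial>N)"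
    using bounded_square_integrable[of a] by (intro nn_integral_eq_integral) auto
  ultimately show ?thesis by (simp add: P_def m_def ennreal_leI)
qed

text \<open>Averaging the previous inequality over a = f y against a weight w (Tonelli):
  the weighted deviation of f from its N-mean is controlled by a pair integral of (f y - f x)^2.\<close>

lemma mean_deviation_le_pair_integral:
  fixes N :: "'a::euclidean_space measure" and f w :: "'a \<Rightarrow> real"
  assumes fin: "finite_measure N" and sets_N [measurable_cong]: "sets N = sets borel"
    and P: "measure N (space N) > 0"
    and f [measurable]: "f \<in> borel_measurable borel" and F: "\<And>x. \<bar>f x\<bar> \<le> F"
    and w [measurable]: "w \<in> borel_measurable borel" and w_nonneg: "\<And>x. w x \<ge> 0"
  defines "m \<equiv> (\<integral>x. f x \<partial>N) / measure N (space N)"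
  shows "ennreal (measure N (space N)) * (\<integral>\<^sup>+y. ennreal ((f y - m)\<^sup>2 * w y) \<partial>lborel)
       \<le> (\<integral>\<^sup>+x. (\<integral>\<^sup>+y. ennreal ((f y - f x)\<^sup>2 * w y) \<partial>lborel) \<partial>N)"
proof -
  interpret N: finite_measure N by (rule fin)
  interpret NL: pair_sigma_finite N "lborel :: 'a measure" by intro_locales
  define P where "P = measure N (space N)"
  have "ennreal P * (\<integral>\<^sup>+y. ennreal ((f y - m)\<^sup>2 * w y) \<partial>lborel)
      = (\<integral>\<^sup>+y. ennreal (P * (f y - m)\<^sup>2) * ennreal (w y) \<partial>lborel)"
    using P w_nonneg
    by (subst nn_integral_cmult[symmetric]) (auto simp: P_def ennreal_mult[symmetric] mult.assoc)
  also have "\<dots> \<le> (\<integral>\<^sup>+y. (\<integral>\<^sup>+x. ennreal ((f y - f x)\<^sup>2) \<partial>N) * ennreal (w y) \<partial>lborel)"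
    using mean_square_lower_bound[OF fin P _ F] by (intro nn_integral_mono mult_right_mono) (simp_all add: P_def m_def)
  also have "\<dots> = (\<integral>\<^sup>+y. (\<integral>\<^sup>+x. ennreal ((f y - f x)\<^sup>2 * w y) \<partial>N) \<partial>lborel)"
    using w_nonneg by (intro nn_integral_cong) (simp add: nn_integral_multc[symmetric] ennreal_mult)
  also have "\<dots> = (\<integral>\<^sup>+x. (\<integral>\<^sup>+y. ennreal ((f y - f x)\<^sup>2 * w y) \<partial>lborel) \<partial>N)"
    by (rule NL.Fubini') measurable
  finally show ?thesis by (simp add: P_def)
qed

lemma mean_deviation_le_Cauchy_Schwarz:
  fixes M :: "'a measure" and \<rho> w f :: "'a \<Rightarrow> real"
  assumes prob: "prob_space (density M \<rho>)"
    and \<rho> [measurable]: "\<rho> \<in> borel_measurable M" and \<rho>_nonneg: "\<And>x. \<rho> x \<ge> 0"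
    and w [measurable]: "w \<in> borel_measurable M" and w_pos: "\<And>x. w x > 0"
    and f [measurable]: "f \<in> borel_measurable M" and F: "\<And>x. \<bar>f x\<bar> \<le> F"
  shows "ennreal ((m - (\<integral>x. f x \<partial>density M \<rho>))\<^sup>2)
       \<le> (\<integral>\<^sup>+x. ennreal ((f x - m)\<^sup>2 * w x) \<partial>M) * (\<integral>\<^sup>+x. ennreal ((\<rho> x)\<^sup>2 / w x) \<partial>M)"
proof -
  interpret \<mu>: prob_space "density M \<rho>" by (rule prob)
  define c where "c = (\<integral>x. f x \<partial>density M \<rho>)"
  have fint: "integrable (density M \<rho>) f"
    by (rule \<mu>.integrable_const_bound[of _ F]) (auto simp: F)
  have "c - m = (\<integral>x. f x - m \<partial>density M \<rho>)"
    using fint \<mu>.prob_space by (simp add: c_def)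
  then have "ennreal \<bar>c - m\<bar> \<le> (\<integral>\<^sup>+x. ennreal \<bar>f x - m\<bar> \<partial>density M \<rho>)"
    using integral_norm_bound_ennreal[of "density M \<rho>" "\<lambda>x. f x - m"] fint by simp
  also have "\<dots> = (\<integral>\<^sup>+x. ennreal (\<bar>f x - m\<bar> * sqrt (w x)) * ennreal (\<rho> x / sqrt (w x)) \<partial>M)"
  proof (subst nn_integral_density)
    show "(\<integral>\<^sup>+x. ennreal (\<rho> x) * ennreal \<bar>f x - m\<bar> \<partial>M)
      = (\<integral>\<^sup>+x. ennreal (\<bar>f x - m\<bar> * sqrt (w x)) * ennreal (\<rho> x / sqrt (w x)) \<partial>M)"
      using w_pos \<rho>_nonneg
      by (intro nn_integral_cong) (simp add: ennreal_mult[symmetric] less_imp_le mult.commute less_imp_neq[symmetric])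
  qed (use \<rho>_nonneg in auto)
  finally have "(ennreal \<bar>c - m\<bar>)\<^sup>2
      \<le> (\<integral>\<^sup>+x. ennreal (\<bar>f x - m\<bar> * sqrt (w x)) * ennreal (\<rho> x / sqrt (w x)) \<partial>M)\<^sup>2"
    by (intro power_mono) auto
  also have "\<dots> \<le> (\<integral>\<^sup>+x. (ennreal (\<bar>f x - m\<bar> * sqrt (w x)))\<^sup>2 \<partial>M)
                  * (\<integral>\<^sup>+x. (ennreal (\<rho> x / sqrt (w x)))\<^sup>2 \<partial>M)"
    by (rule Cauchy_Schwarz_nn_integral) auto
  also have "\<dots> = (\<integral>\<^sup>+x. ennreal ((f x - m)\<^sup>2 * w x) \<partial>M) * (\<integral>\<^sup>+x. ennreal ((\<rho> x)\<^sup>2 / w x) \<partial>M)"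
    using w_pos \<rho>_nonneg
    by (intro arg_cong2[where f="(*)"] nn_integral_cong)
       (simp_all add: ennreal_power less_imp_le power_mult_distrib power_divide)
  finally show ?thesis
    by (simp add: c_def ennreal_power power2_commute)
qed

lemma nn_integral_square_shift:
  fixes M :: "'a measure" and f w :: "'a \<Rightarrow> real"
  assumes [measurable]: "f \<in> borel_measurable M" "w \<in> borel_measurable M"
    and w_nonneg: "\<And>x. w x \<ge> 0"
  shows "(\<integral>\<^sup>+x. ennreal ((f x - c)\<^sup>2 * w x) \<partial>M)
       \<le> 2 * ((\<integral>\<^sup>+x. ennreal ((f x - m)\<^sup>2 * w x) \<partial>M) + ennreal ((m - c)\<^sup>2) * (\<integral>\<^sup>+x. ennreal (w x) \<partial>M))"
proof -
  have "(\<integral>\<^sup>+x. ennreal ((f x - c)\<^sup>2 * w x) \<partial>M)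
      \<le> (\<integral>\<^sup>+x. 2 * (ennreal ((f x - m)\<^sup>2 * w x) + ennreal ((m - c)\<^sup>2) * ennreal (w x)) \<partial>M)"
  proof (rule nn_integral_mono)
    fix x
    have "(f x - c)\<^sup>2 \<le> 2 * (f x - m)\<^sup>2 + 2 * (m - c)\<^sup>2"
      using sum_squares_bound[of "f x - m" "m - c"] by (simp add: power2_eq_square algebra_simps)
    then have "(f x - c)\<^sup>2 * w x \<le> (2 * (f x - m)\<^sup>2 + 2 * (m - c)\<^sup>2) * w x"
      using w_nonneg[of x] by (rule mult_right_mono)
    also have "\<dots> = 2 * ((f x - m)\<^sup>2 * w x + (m - c)\<^sup>2 * w x)"
      by (simp add: algebra_simps)
    finally have "(f x - c)\<^sup>2 * w x \<le> 2 * ((f x - m)\<^sup>2 * w x + (m - c)\<^sup>2 * w x)" .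
    then show "ennreal ((f x - c)\<^sup>2 * w x)
        \<le> 2 * (ennreal ((f x - m)\<^sup>2 * w x) + ennreal ((m - c)\<^sup>2) * ennreal (w x))"
      using w_nonneg[of x] zero_le_power2[of "f x - m"] zero_le_power2[of "m - c"]
      by (metis ennreal_leI ennreal_mult ennreal_numeral ennreal_plus
          mult_nonneg_nonneg add_nonneg_nonneg zero_le_numeral)
  qed
  also have "\<dots> = 2 * ((\<integral>\<^sup>+x. ennreal ((f x - m)\<^sup>2 * w x) \<partial>M)
                     + ennreal ((m - c)\<^sup>2) * (\<integral>\<^sup>+x. ennreal (w x) \<partial>M))"
    by (simp add: nn_integral_cmult nn_integral_add)
  finally show ?thesis .
qed

text \<open>The bookkeeping that combines the three previous estimates into one constant.\<close>

lemma ennreal_absorb_shift: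
  fixes A E L S :: ennreal and P K W :: real
  assumes P: "P > 0" and K: "K \<ge> 0" and W: "W \<ge> 0"
    and local: "ennreal P * A \<le> E" and shift: "S \<le> A * ennreal K"
    and split: "L \<le> 2 * (A + S * ennreal W)"
  shows "L \<le> ennreal (2 * (1 + K * W) / P) * E"
proof -
  have scalar: "ennreal (2 * (1 + K * W)) = 2 * (1 + ennreal K * ennreal W)"
  proof -
    have "ennreal (2 * (1 + K * W)) = 2 * ennreal (1 + K * W)"
      using K W by (subst ennreal_mult) simp_all
    also have "\<dots> = 2 * (1 + ennreal K * ennreal W)"
      using K W by (simp add: ennreal_mult)
    finally show ?thesis .
  qed
  have "L \<le> 2 * (A + A * ennreal K * ennreal W)"
    using split shift by (meson add_left_mono mult_left_mono mult_right_mono order_trans zero_le)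
  also have "\<dots> = ennreal (2 * (1 + K * W)) * A"
    unfolding scalar by (simp add: ring_distribs mult.commute mult.left_commute)
  also have "\<dots> = ennreal (2 * (1 + K * W) / P) * (ennreal P * A)"
    using P K W by (simp add: ennreal_mult[symmetric] mult.assoc[symmetric])
  also have "\<dots> \<le> ennreal (2 * (1 + K * W) / P) * E"
    using local by (rule mult_left_mono) simp
  finally show ?thesis .
qed

text \<open>The proof centres f at its mean m over B, bounds the deviation from m by the pair
  integral, and the shift from m to the global mean by Cauchy-Schwarz.\<close>

lemma weighted_variance_le_local_energy:
  fixes \<rho> w :: "'a::euclidean_space \<Rightarrow> real" and B :: "'a set"
  defines "\<mu> \<equiv> density lborel (\<lambda>x. ennreal (\<rho> x))"
  assumes prob: "prob_space \<mu>"
    and \<rho> [measurable]: "\<rho> \<in> borel_measurable borel" and \<rho>_nonneg: "\<And>x. \<rho> x \<ge> 0"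
    and w [measurable]: "w \<in> borel_measurable borel" and w_pos: "\<And>x. w x > 0"
    and W: "(\<integral>\<^sup>+x. ennreal (w x) \<partial>lborel) < \<infinity>"
    and K: "(\<integral>\<^sup>+x. ennreal ((\<rho> x)\<^sup>2 / w x) \<partial>lborel) < \<infinity>"
    and B [measurable]: "B \<in> sets borel" and B_pos: "emeasure \<mu> B > 0"
  shows "\<exists>C>0. \<forall>f. f \<in> borel_measurable borel \<longrightarrow> bounded (range f) \<longrightarrow>
           (\<integral>\<^sup>+x. ennreal ((f x - (\<integral>y. f y \<partial>\<mu>))\<^sup>2 * w x) \<partial>lborel)
           \<le> ennreal C * (\<integral>\<^sup>+x. indicator B x * (\<integral>\<^sup>+y. ennreal ((f y - f x)\<^sup>2 * w y) \<partial>lborel) \<partial>\<mu>)"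
proof -
  interpret \<mu>: prob_space \<mu> by (rule prob)
  have sets_\<mu> [measurable_cong]: "sets \<mu> = sets borel" by (simp add: \<mu>_def)
  define N where "N = density \<mu> (indicator B)"
  have sets_N [measurable_cong]: "sets N = sets borel" by (simp add: N_def sets_\<mu>)
  have emeasure_N: "emeasure N (space N) = emeasure \<mu> B"
    by (simp add: N_def emeasure_restricted sets_\<mu> \<mu>_def)
  have finite_N: "finite_measure N"
    by (rule finite_measureI) (simp add: emeasure_N \<mu>.emeasure_finite)
  define P where "P = measure \<mu> B"
  have P_eq: "measure N (space N) = P" by (simp add: P_def measure_def emeasure_N)
  have P_pos: "P > 0"
    using B_pos \<mu>.emeasure_finite[of B] by (simp add: P_def \<mu>.emeasure_eq_measure)
  obtain K' where K': "(\<integral>\<^sup>+x. ennreal ((\<rho> x)\<^sup>2 / w x) \<partial>lborel) = ennreal K'" "K' \<ge> 0"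
    using K by (cases "\<integral>\<^sup>+x. ennreal ((\<rho> x)\<^sup>2 / w x) \<partial>lborel") auto
  obtain W' where W': "(\<integral>\<^sup>+x. ennreal (w x) \<partial>lborel) = ennreal W'" "W' \<ge> 0"
    using W by (cases "\<integral>\<^sup>+x. ennreal (w x) \<partial>lborel") auto
  show ?thesis
  proof (intro exI conjI allI impI)
    show "2 * (1 + K' * W') / P > 0" using P_pos K' W' by (simp add: add_pos_nonneg)
    fix f :: "'a \<Rightarrow> real"
    assume f [measurable]: "f \<in> borel_measurable borel" and "bounded (range f)"
    then obtain F where F: "\<And>x. \<bar>f x\<bar> \<le> F" unfolding bounded_iff by auto
    define m where "m = (\<integral>x. f x \<partial>N) / P"
    define A where "A = (\<integral>\<^sup>+y. ennreal ((f y - m)\<^sup>2 * w y) \<partial>lborel)"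
    have "ennreal P * A \<le> (\<integral>\<^sup>+x. (\<integral>\<^sup>+y. ennreal ((f y - f x)\<^sup>2 * w y) \<partial>lborel) \<partial>N)"
      using mean_deviation_le_pair_integral[OF finite_N sets_N _ f F w] P_pos w_pos
      by (simp add: P_eq A_def m_def less_imp_le)
    also have "\<dots> = (\<integral>\<^sup>+x. indicator B x * (\<integral>\<^sup>+y. ennreal ((f y - f x)\<^sup>2 * w y) \<partial>lborel) \<partial>\<mu>)"
      unfolding N_def by (rule nn_integral_density) auto
    finally have local: "ennreal P * A \<le> \<dots>" .
    have shift: "ennreal ((m - (\<integral>y. f y \<partial>\<mu>))\<^sup>2) \<le> A * ennreal K'"
      using mean_deviation_le_Cauchy_Schwarz[of lborel \<rho> w f F m] prob \<rho>_nonneg w_pos F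
      by (simp add: \<mu>_def A_def K')
    show "(\<integral>\<^sup>+x. ennreal ((f x - (\<integral>y. f y \<partial>\<mu>))\<^sup>2 * w x) \<partial>lborel)
        \<le> ennreal (2 * (1 + K' * W') / P)
          * (\<integral>\<^sup>+x. indicator B x * (\<integral>\<^sup>+y. ennreal ((f y - f x)\<^sup>2 * w y) \<partial>lborel) \<partial>\<mu>)"
      using nn_integral_square_shift[of f lborel w "\<integral>y. f y \<partial>\<mu>" m] w_pos
      by (intro ennreal_absorb_shift[OF P_pos K'(2) W'(2) local shift])
         (simp_all add: A_def W'(1) less_imp_le)
  qed
qed

lemma decay_weight_le_kernel:
  fixes x y :: "'a::real_normed_vector"
  assumes xy: "y \<noteq> x" and x: "norm x \<le> R" and R: "R \<ge> 1" and p: "p \<ge> 0" and \<delta>: "\<delta> \<ge> 0"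
  shows "decay_weight \<delta> p y \<le> R powr p * exp (\<delta> * R) * (exp (- \<delta> * norm (y - x)) / norm (y - x) powr p)"
proof -
  define t where "t = norm (y - x)"
  have t: "t > 0" using xy by (simp add: t_def)
  have t_le: "t \<le> norm y + R" using x norm_triangle_ineq4[of y x] by (simp add: t_def)
  also have "\<dots> \<le> R * (1 + norm y)"
    using R mult_right_mono[OF R, of "norm y"] by (simp add: algebra_simps)
  finally have "t powr p \<le> R powr p * (1 + norm y) powr p"
    using t p R by (simp add: powr_mult[symmetric] powr_mono2)
  moreover have "(1 + norm y) powr p > 0" "t powr p > 0"
    using t add_pos_nonneg[OF zero_less_one norm_ge_zero[of y]] by simp_all
  ultimately have poly: "1 / (1 + norm y) powr p \<le> R powr p / t powr p"
    by (simp add: divide_le_eq le_divide_eq mult.commute)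
  have "\<delta> * t \<le> \<delta> * (norm y + R)" using t_le \<delta> by (rule mult_left_mono)
  then have expo: "exp (- \<delta> * norm y) \<le> exp (\<delta> * R) * exp (- \<delta> * t)"
    by (simp add: mult_exp_exp algebra_simps)
  have "decay_weight \<delta> p y = exp (- \<delta> * norm y) * (1 / (1 + norm y) powr p)"
    by (simp add: decay_weight_def)
  also have "\<dots> \<le> (exp (\<delta> * R) * exp (- \<delta> * t)) * (R powr p / t powr p)"
    using expo poly by (intro mult_mono) auto
  finally show ?thesis by (simp add: t_def field_simps)
qed

lemma exists_ball_positive_measure:
  fixes \<mu> :: "'a::real_normed_vector measure"
  assumes sets_\<mu>: "sets \<mu> = sets borel" and nontrivial: "emeasure \<mu> (space \<mu>) \<noteq> 0"
  obtains R where "R \<ge> R0" "emeasure \<mu> (cball 0 R) > 0"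
proof (rule ccontr)
  assume no_ball: "\<not> thesis"
  have "cball 0 (max R0 (real n)) \<in> null_sets \<mu>" for n :: nat
    using no_ball that[of "max R0 (real n)"] by (auto simp: null_sets_def sets_\<mu> zero_less_iff_neq_zero)
  then have "(\<Union>n::nat. cball (0::'a) (max R0 (real n))) \<in> null_sets \<mu>"
    by (rule null_sets_UN)
  moreover have "(\<Union>n::nat. cball (0::'a) (max R0 (real n))) = space \<mu>"
    using sets_eq_imp_space_eq[OF sets_\<mu>] by (auto simp: real_arch_simple le_max_iff_disj)
  ultimately show False using nontrivial by (simp add: null_sets_def)
qed

lemma muV_prob_space:
  fixes V :: "'a::euclidean_space \<Rightarrow> real"
  assumes V [measurable]: "V \<in> borel_measurable borel"
    and integrable: "integrable lborel (\<lambda>x. exp (- V x))"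
  shows "ZV V > 0" and "prob_space (muV V)"
proof -
  have "ZV V \<noteq> 0"
  proof
    assume "ZV V = 0"
    then have "AE x in (lborel::'a measure). exp (- V x) = 0"
      using integral_nonneg_eq_0_iff_AE[OF integrable] by (simp add: ZV_def)
    then have "AE x in (lborel::'a measure). False" by simp
    then have "emeasure (lborel::'a measure) (space lborel) = 0"
      using ae_filter_eq_bot_iff trivial_limit_def by metis
    then show False by simp
  qed
  moreover have "ZV V \<ge> 0" by (simp add: ZV_def)
  ultimately show Z: "ZV V > 0" by simp
  have "emeasure (muV V) (space (muV V)) = (\<integral>\<^sup>+x. ennreal (exp (- V x) / ZV V) \<partial>lborel)"
    by (simp add: muV_def emeasure_density)
  also have "\<dots> = ennreal (\<integral>x. exp (- V x) / ZV V \<partial>lborel)"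
    using integrable by (intro nn_integral_eq_integral) (simp_all add: less_imp_le[OF Z])
  also have "\<dots> = 1" using Z by (simp add: ZV_def)
  finally show "prob_space (muV V)" by (rule prob_spaceI)
qed

text \<open>The abstract Poincare inequality specialised to mu_V, the weight decay_weight and a
  large ball; the decay of exp(-V) beyond radius R1 makes the Cauchy-Schwarz term finite.\<close>

lemma muV_weighted_variance_le_local_energy:
  fixes V :: "'a::euclidean_space \<Rightarrow> real"
  assumes V [measurable]: "V \<in> borel_measurable borel"
    and expV_bdd: "\<And>x. exp (- V x) \<le> M"
    and expV_int: "integrable lborel (\<lambda>x. exp (- V x))"
    and \<delta>: "\<delta> > 0" and p: "p > 0"
    and decay: "\<And>x. norm x \<ge> R1 \<Longrightarrow> exp (- V x) \<le> exp (- \<delta> * norm x)"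
  obtains C R where "C > 0" "R \<ge> R1"
    "\<And>f. f \<in> borel_measurable borel \<Longrightarrow> bounded (range f) \<Longrightarrow>
       (\<integral>\<^sup>+x. ennreal ((f x - muV_int V f)\<^sup>2 * decay_weight \<delta> p x) \<partial>lborel)
       \<le> ennreal C * (\<integral>\<^sup>+x. indicator (cball 0 R) x
            * (\<integral>\<^sup>+y. ennreal ((f y - f x)\<^sup>2 * decay_weight \<delta> p y) \<partial>lborel) \<partial>muV V)"
proof -
  define \<rho> where "\<rho> x = exp (- V x) / ZV V" for x :: 'a
  have Z: "ZV V > 0" and prob: "prob_space (muV V)"
    using muV_prob_space[OF V expV_int] by auto
  have muV_eq: "muV V = density lborel (\<lambda>x. ennreal (\<rho> x))"
    by (simp add: muV_def \<rho>_def)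
  have \<rho>_meas: "\<rho> \<in> borel_measurable borel" unfolding \<rho>_def by measurable
  have \<rho>_nonneg: "\<And>x. \<rho> x \<ge> 0" using Z by (simp add: \<rho>_def)
  have W: "(\<integral>\<^sup>+x. ennreal (decay_weight \<delta> p x) \<partial>lborel) < \<infinity>"
    using \<delta> p by (intro nn_integral_decay_weight_finite) auto
  have K: "(\<integral>\<^sup>+x. ennreal ((\<rho> x)\<^sup>2 / decay_weight \<delta> p x) \<partial>lborel) < \<infinity>"
    using decay Z expV_bdd \<delta> p
    by (intro nn_integral_sq_over_decay_weight_finite[where M = "M / ZV V" and R = R1 and c = "1 / ZV V"])
       (auto simp: \<rho>_def divide_right_mono)
  obtain R where R: "R \<ge> R1" "emeasure (muV V) (cball 0 R) > 0"
    using exists_ball_positive_measure[of "muV V" R1] prob_space.emeasure_space_1[OF prob]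
    by (auto simp: muV_def)
  show ?thesis
    using weighted_variance_le_local_energy[OF prob[unfolded muV_eq] \<rho>_meas \<rho>_nonneg
        decay_weight_measurable decay_weight_pos W K borel_closed[OF closed_cball] R(2)[unfolded muV_eq]]
      that R(1) unfolding muV_int_def muV_eq by blast
qed

text \<open>Integrating against mu_V cancels the factor exp V of the theorem's integrand.\<close>

lemma nn_integral_muV_weighted:
  fixes V h :: "'a::euclidean_space \<Rightarrow> real"
  assumes V [measurable]: "V \<in> borel_measurable borel" and Z: "ZV V > 0"
    and h [measurable]: "h \<in> borel_measurable borel" and h_nonneg: "\<And>x. h x \<ge> 0"
  shows "(\<integral>\<^sup>+x. ennreal (h x * exp (V x - \<delta> * norm x) / (1 + norm x) powr p) \<partial>muV V)
       = ennreal (1 / ZV V) * (\<integral>\<^sup>+x. ennreal (h x * decay_weight \<delta> p x) \<partial>lborel)"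
proof -
  have "(\<integral>\<^sup>+x. ennreal (h x * exp (V x - \<delta> * norm x) / (1 + norm x) powr p) \<partial>muV V)
      = (\<integral>\<^sup>+x. ennreal (exp (- V x) / ZV V)
                 * ennreal (h x * exp (V x - \<delta> * norm x) / (1 + norm x) powr p) \<partial>lborel)"
    unfolding muV_def by (rule nn_integral_density) auto
  also have "\<dots> = (\<integral>\<^sup>+x. ennreal (1 / ZV V) * ennreal (h x * decay_weight \<delta> p x) \<partial>lborel)"
  proof (rule nn_integral_cong)
    fix x :: 'a
    have "exp (- V x) / ZV V * (h x * exp (V x - \<delta> * norm x) / (1 + norm x) powr p)
        = 1 / ZV V * (h x * decay_weight \<delta> p x)"
      by (simp add: decay_weight_def exp_diff exp_minus field_simps)
    then show "ennreal (exp (- V x) / ZV V) * ennreal (h x * exp (V x - \<delta> * norm x) / (1 + norm x) powr p)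
        = ennreal (1 / ZV V) * ennreal (h x * decay_weight \<delta> p x)"
      using Z h_nonneg[of x] by (simp add: ennreal_mult[symmetric] decay_weight_def)
  qed
  also have "\<dots> = ennreal (1 / ZV V) * (\<integral>\<^sup>+x. ennreal (h x * decay_weight \<delta> p x) \<partial>lborel)"
    by (rule nn_integral_cmult) simp
  finally show ?thesis .
qed

lemma local_energy_le_Dform:
  fixes V f :: "'a::euclidean_space \<Rightarrow> real"
  assumes f [measurable]: "f \<in> borel_measurable borel"
    and B: "B \<subseteq> cball 0 R" and R: "R \<ge> 1" and \<alpha>: "\<alpha> \<ge> 0" and \<delta>: "\<delta> \<ge> 0"
  defines "p \<equiv> real DIM('a) + \<alpha>"
  shows "(\<integral>\<^sup>+x. indicator B x * (\<integral>\<^sup>+y. ennreal ((f y - f x)\<^sup>2 * decay_weight \<delta> p y) \<partial>lborel) \<partial>muV V)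
       \<le> ennreal (R powr p * exp (\<delta> * R)) * Dform \<alpha> V \<delta> f"
proof -
  define CR where "CR = R powr p * exp (\<delta> * R)"
  define k where "k x y = (f y - f x)\<^sup>2 / norm (y - x) powr p * exp (- \<delta> * norm (y - x))" for x y :: 'a
  have sets_muV [measurable_cong]: "sets (muV V) = sets borel" by (simp add: muV_def)
  have k_meas [measurable]: "(\<lambda>(x, y). k x y) \<in> borel_measurable (borel \<Otimes>\<^sub>M borel)"
    unfolding k_def by measurable
  have p: "p \<ge> 0" using \<alpha> by (simp add: p_def)
  have "(\<integral>\<^sup>+x. indicator B x * (\<integral>\<^sup>+y. ennreal ((f y - f x)\<^sup>2 * decay_weight \<delta> p y) \<partial>lborel) \<partial>muV V)
      \<le> (\<integral>\<^sup>+x. ennreal CR * (\<integral>\<^sup>+y. ennreal (k x y) \<partial>lborel) \<partial>muV V)"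
  proof (rule nn_integral_mono)
    fix x :: 'a
    show "indicator B x * (\<integral>\<^sup>+y. ennreal ((f y - f x)\<^sup>2 * decay_weight \<delta> p y) \<partial>lborel)
        \<le> ennreal CR * (\<integral>\<^sup>+y. ennreal (k x y) \<partial>lborel)"
    proof (cases "x \<in> B")
      case True
      then have x: "norm x \<le> R" using B by auto
      have "(\<integral>\<^sup>+y. ennreal ((f y - f x)\<^sup>2 * decay_weight \<delta> p y) \<partial>lborel)
          \<le> (\<integral>\<^sup>+y. ennreal CR * ennreal (k x y) \<partial>lborel)"
      proof (rule nn_integral_mono)
        fix y :: 'a
        have "(f y - f x)\<^sup>2 * decay_weight \<delta> p y \<le> CR * k x y"
        proof (cases "y = x")
          case False
          have "(f y - f x)\<^sup>2 * decay_weight \<delta> p y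
              \<le> (f y - f x)\<^sup>2 * (CR * (exp (- \<delta> * norm (y - x)) / norm (y - x) powr p))"
            using decay_weight_le_kernel[OF False x R p \<delta>] by (intro mult_left_mono) (auto simp: CR_def)
          then show ?thesis by (simp add: k_def ac_simps)
        qed (simp add: k_def)
        then show "ennreal ((f y - f x)\<^sup>2 * decay_weight \<delta> p y) \<le> ennreal CR * ennreal (k x y)"
          by (simp add: CR_def k_def ennreal_mult[symmetric] ennreal_leI)
      qed
      also have "\<dots> = ennreal CR * (\<integral>\<^sup>+y. ennreal (k x y) \<partial>lborel)"
        by (rule nn_integral_cmult) simp
      finally show ?thesis using True by simp
    qed simp
  qed
  also have "\<dots> = ennreal CR * Dform \<alpha> V \<delta> f"
    by (subst nn_integral_cmult) (simp_all add: Dform_def k_def p_def)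
  finally show ?thesis by (simp add: CR_def)
qed

lemma Cb_inf_measurable_bounded:
  assumes "Cb_inf f"
  shows "f \<in> borel_measurable borel" and "bounded (range f)"
proof -
  have "(\<forall>x. f differentiable (at x)) \<and> bounded (range f)"
    using assms unfolding Cb_inf_def by (metis iter_deriv.simps(1) lists.Nil)
  then show "f \<in> borel_measurable borel" and "bounded (range f)"
    by (auto intro!: borel_measurable_continuous_onI continuous_at_imp_continuous_on
        differentiable_imp_continuous_within)
qed

theorem theorem1p1:
  fixes V :: "'a::euclidean_space \<Rightarrow> real"
    and \<delta> \<alpha> \<alpha>0 :: real
  assumes V_meas: "V \<in> borel_measurable borel"
    and V_locbdd: "\<And>K. compact K \<Longrightarrow> bounded (V ` K)"
    and expV_bdd: "bounded (range (\<lambda>x. exp (- V x)))"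
    and expV_int: "integrable lborel (\<lambda>x. exp (- V x))"
    and \<delta>: "\<delta> > 0"
    and \<alpha>: "0 < \<alpha>" "\<alpha> < 2"
    and \<alpha>0: "0 < \<alpha>0" "\<alpha>0 < 1"
    and tail: "Limsup at_infinity (\<lambda>x::'a. ereal ((SUP z \<in> {z. norm z \<ge> norm x}. exp (- V z))
                  * exp (\<delta> * norm x) * norm x powr (real DIM('a) + \<alpha> - \<alpha>0))) = 0"
  shows "\<exists>C1>0. \<forall>f. Cb_inf f \<longrightarrow>
           (\<integral>\<^sup>+x. ennreal ((f x - muV_int V f)\<^sup>2 * exp (V x - \<delta> * norm x)
                     / (1 + norm x) powr (real DIM('a) + \<alpha>)) \<partial>muV V)
           \<le> ennreal C1 * Dform \<alpha> V \<delta> f"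
proof -
  define p where "p = real DIM('a) + \<alpha>"
  have p: "p > 0" using \<alpha> by (simp add: p_def add_pos_pos)
  have Z: "ZV V > 0" using muV_prob_space(1)[OF V_meas expV_int] .
  obtain M where M: "\<And>x. exp (- V x) \<le> M"
    using expV_bdd unfolding bounded_iff by auto
  have "real DIM('a) \<ge> 1" using DIM_positive[where 'a='a] by (simp add: Suc_le_eq)
  then have q: "real DIM('a) + \<alpha> - \<alpha>0 \<ge> 0" using \<alpha> \<alpha>0 by linarith
  obtain R1 where R1: "R1 \<ge> 1" "\<And>x. norm x \<ge> R1 \<Longrightarrow> exp (- V x) \<le> exp (- \<delta> * norm x)"
    by (rule decay_from_Limsup[where \<delta> = \<delta>, OF _ bounded_imp_bdd_above[OF expV_bdd] q])
       (simp_all add: tail)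
  obtain C R where C: "C > 0" and R: "R \<ge> R1" and variance: "\<And>f. f \<in> borel_measurable borel \<Longrightarrow>
      bounded (range f) \<Longrightarrow>
      (\<integral>\<^sup>+x. ennreal ((f x - muV_int V f)\<^sup>2 * decay_weight \<delta> p x) \<partial>lborel)
      \<le> ennreal C * (\<integral>\<^sup>+x. indicator (cball 0 R) x
            * (\<integral>\<^sup>+y. ennreal ((f y - f x)\<^sup>2 * decay_weight \<delta> p y) \<partial>lborel) \<partial>muV V)"
    using muV_weighted_variance_le_local_energy[OF V_meas M expV_int \<delta> p R1(2)] by blast
  define CR where "CR = R powr p * exp (\<delta> * R)"
  show ?thesis
  proof (intro exI[of _ "C * CR / ZV V"] conjI allI impI)
    show "C * CR / ZV V > 0" using C Z R R1 by (simp add: CR_def)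
    fix f :: "'a \<Rightarrow> real"
    assume "Cb_inf f"
    note f = Cb_inf_measurable_bounded[OF this]
    have energy: "(\<integral>\<^sup>+x. indicator (cball 0 R) x
          * (\<integral>\<^sup>+y. ennreal ((f y - f x)\<^sup>2 * decay_weight \<delta> p y) \<partial>lborel) \<partial>muV V)
        \<le> ennreal CR * Dform \<alpha> V \<delta> f"
      unfolding p_def CR_def using R R1 \<alpha> \<delta> by (intro local_energy_le_Dform f(1)) auto
    have "(\<integral>\<^sup>+x. ennreal ((f x - muV_int V f)\<^sup>2 * exp (V x - \<delta> * norm x) / (1 + norm x) powr p) \<partial>muV V)
        = ennreal (1 / ZV V) * (\<integral>\<^sup>+x. ennreal ((f x - muV_int V f)\<^sup>2 * decay_weight \<delta> p x) \<partial>lborel)"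
      using f(1) by (intro nn_integral_muV_weighted V_meas Z) auto
    also have "\<dots> \<le> ennreal (1 / ZV V) * (ennreal C * (ennreal CR * Dform \<alpha> V \<delta> f))"
      using order_trans[OF variance[OF f] mult_left_mono[OF energy]] by (intro mult_left_mono) simp_all
    also have "\<dots> = ennreal (C * CR / ZV V) * Dform \<alpha> V \<delta> f"
    proof -
      have "ennreal (C * CR / ZV V) = ennreal (1 / ZV V) * (ennreal C * ennreal CR)"
        using C Z R R1 by (simp add: CR_def ennreal_mult[symmetric])
      then show ?thesis by (simp add: mult.assoc)
    qed
    finally show "(\<integral>\<^sup>+x. ennreal ((f x - muV_int V f)\<^sup>2 * exp (V x - \<delta> * norm x)
        / (1 + norm x) powr (real DIM('a) + \<alpha>)) \<partial>muV V) \<le> ennreal (C * CR / ZV V) * Dform \<alpha> V \<delta> f"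
      by (simp add: p_def)
  qed
qed

end
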